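(* Consider periods $t=0,1,\dots,T$ with treatment statuses $D_0=0,D_1,\dots,D_T\in\{0,1\}$ and outcomes $Y_t$, and covariates $X=(X_1,\dots,X_T)$. For $g\in\{1,\dots,T\}$ let $D^g=\mathbf 1\{(D_0,\dots,D_T)=(0,\dots,0,D_g=1,1,\dots,1)\}$ be the indicator of being first treated in period $g$ (and treated thereafter), and $D^0=\mathbf 1\{(D_0,\dots,D_T)=(0,\dots,0)\}$ the indicator of never being treated. Assume $\mathbb E[D^g]>0$ and $\mathbb E[D^0\mid X]>0$ a.s. Let $P^s(X)$, $s=0,\dots,T$, be postulated models for the propensity scores $\mathbb E[D^s\mid X]$, with $P^0(X)>0$, and let $\mu_0^t(X)$ be a postulated model for $\mathbb E[Y_t\mid D^0=1,X]$. Define $$\tau_t^{g,DR}=\frac{1}{\mathbb E[D^g]}\,\mathbb E\!\left[\Big(D^g-\frac{P^g(X)}{P^0(X)}D^0\Big)\big(Y_t-\mu_0^t(X)\big)\right],$$ and $\theta^t_{DIM}(g,x)=\mathbb E[Y_t\mid D^g=1,X=x]-\mathbb E[Y_t\mid D^0=1,X=x]$. If either $P^s(X)=\mathbb E[D^s\mid X]$ a.s. for all $s\in\{0,1,\dots,T\}$, or $\mu_0^t(X)=\mathbb E[Y_t\mid D^0=1,X]$ a.s. (not necessarily both), then $$\tau_t^{g,DR}=\int\theta^t_{DIM}(g,x)\,dF_{X\mid D^g=1}(x),$$ where $F_{X\mid D^g=1}$ is the conditional distribution of $X$ given $D^g=1$.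
   Context: This is the staggered-adoption setting: each unit is either never treated or is first treated in some period $g$ and remains treated afterwards. All expectations involved are assumed to exist and be finite. *)

theory Defs
  imports "HOL-Probability.Probability"
begin

definition cohort :: "(nat \<Rightarrow> 'a \<Rightarrow> real) \<Rightarrow> nat \<Rightarrow> nat \<Rightarrow> 'a \<Rightarrow> real" where
  "cohort D T g w =
     (if g = 0 then (if (\<forall>t\<le>T. D t w = 0) then 1 else 0)
      else (if (\<forall>t\<le>T. D t w = (if g \<le> t then 1 else 0)) then 1 else 0))"

definition sigmaX :: "'a measure \<Rightarrow> 'x measure \<Rightarrow> ('a \<Rightarrow> 'x) \<Rightarrow> 'a measure" where
  "sigmaX M N X = vimage_algebra (space M) X N"

definition cohort_set :: "'a measure \<Rightarrow> (nat \<Rightarrow> 'a \<Rightarrow> real) \<Rightarrow> nat \<Rightarrow> nat \<Rightarrow> 'a set" where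
  "cohort_set M D T s = {w \<in> space M. cohort D T s w = 1}"

definition tau_DR ::
  "'a measure \<Rightarrow> (nat \<Rightarrow> 'a \<Rightarrow> real) \<Rightarrow> nat \<Rightarrow> ('a \<Rightarrow> 'x) \<Rightarrow> (nat \<Rightarrow> 'x \<Rightarrow> real)
    \<Rightarrow> ('x \<Rightarrow> real) \<Rightarrow> ('a \<Rightarrow> real) \<Rightarrow> nat \<Rightarrow> real" where
  "tau_DR M D T X P mu Yt g =
     (1 / (\<integral>w. cohort D T g w \<partial>M)) *
     (\<integral>w. (cohort D T g w - P g (X w) / P 0 (X w) * cohort D T 0 w) * (Yt w - mu (X w)) \<partial>M)"

end

theory Submission
  imports Defs
begin

text \<open>Write c_s for the cohort indicators and h = P^g(X)/P^0(X).  By linearity the score splits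
  into E[c_g Y] - E[c_g mu] - E[h c_0 Y] + E[h c_0 mu].  Since h is a function of X, the tower
  property under M conditioned on each cohort replaces Y by m_g(X) in the first term and by m_0(X)
  in the third.  What remains, E[c_g mu] + E[h c_0 m_0] - E[h c_0 mu] = E[c_g m_0], is the
  double robustness: with correct propensity scores E[h c_0 f(X)] = E[h E[c_0|X] f(X)] =
  E[c_g f(X)] for every f, so both weighted terms move to the cohort g; with a correct outcome
  model mu = m_0 a.s. and the two weighted terms cancel.\<close>

lemma uniform_measure_eq_density_real:
  assumes "emeasure M A \<noteq> 0" "emeasure M A \<noteq> \<infinity>"
  shows "uniform_measure M A = density M (\<lambda>x. ennreal (indicator A x / measure M A))"
proof -
  have "measure M A > 0"
    using assms by (simp add: emeasure_eq_ennreal_measure zero_less_measure_iff)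
  then show ?thesis
    using assms unfolding uniform_measure_def
    by (intro arg_cong[where f="density M"] ext)
       (auto simp: emeasure_eq_ennreal_measure divide_ennreal divide_ennreal[of 1, simplified]
          indicator_def)
qed

lemma
  fixes f :: "'a \<Rightarrow> real"
  assumes A: "emeasure M A \<noteq> 0" "emeasure M A \<noteq> \<infinity>" and [measurable]: "f \<in> borel_measurable M"
  shows integrable_uniform_measure_iff:
      "integrable (uniform_measure M A) f \<longleftrightarrow> integrable M (\<lambda>x. indicator A x * f x)"
    and integral_uniform_measure:
      "integral\<^sup>L (uniform_measure M A) f = (\<integral>x. indicator A x * f x \<partial>M) / measure M A"
proof -
  have [measurable]: "A \<in> sets M" using A(1) by (rule emeasure_neq_0_sets)
  have pos: "measure M A > 0"
    using A by (simp add: emeasure_eq_ennreal_measure zero_less_measure_iff)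
  have "integrable (uniform_measure M A) f
      \<longleftrightarrow> integrable M (\<lambda>x. (1 / measure M A) * (indicator A x * f x))"
    unfolding uniform_measure_eq_density_real[OF A] by (subst integrable_density) auto
  then show "integrable (uniform_measure M A) f \<longleftrightarrow> integrable M (\<lambda>x. indicator A x * f x)"
    using pos by (simp only: integrable_mult_left_iff) simp
  have "integral\<^sup>L (uniform_measure M A) f = (\<integral>x. (1 / measure M A) * (indicator A x * f x) \<partial>M)"
    unfolding uniform_measure_eq_density_real[OF A] by (subst integral_density) auto
  then show "integral\<^sup>L (uniform_measure M A) f = (\<integral>x. indicator A x * f x \<partial>M) / measure M A"
    by simp
qed

lemma (in finite_measure_subalgebra) real_cond_exp_uniform_measure_intg:
  fixes h Y u :: "'a \<Rightarrow> real"
  assumes [measurable]: "A \<in> sets M" "h \<in> borel_measurable F" "Y \<in> borel_measurable M"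
      "u \<in> borel_measurable M"
    and u_version: "AE x in uniform_measure M A. u x = real_cond_exp (uniform_measure M A) F Y x"
    and int: "integrable M (\<lambda>x. indicator A x * h x * Y x)"
  shows "integrable M (\<lambda>x. indicator A x * h x * u x) \<and>
    (\<integral>x. indicator A x * h x * u x \<partial>M) = (\<integral>x. indicator A x * h x * Y x \<partial>M)"
proof -
  have [measurable]: "h \<in> borel_measurable M" by (rule measurable_from_subalg[OF subalg]) simp
  show ?thesis
  proof (cases "emeasure M A = 0")
    case True
    have "AE x in M. x \<notin> A" using True by (intro AE_not_in) auto
    then have u0: "AE x in M. indicator A x * h x * u x = 0"
      and Y0: "AE x in M. indicator A x * h x * Y x = 0"
      by (auto elim: AE_mp)
    show ?thesis
      using integrable_cong_AE[OF _ _ u0] integral_cong_AE[OF _ _ u0] integral_cong_AE[OF _ _ Y0]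
      by simp
  next
    case False
    have A: "emeasure M A \<noteq> 0" "emeasure M A \<noteq> \<infinity>" using False by auto
    define U where "U = uniform_measure M A"
    interpret U: finite_measure_subalgebra U F
    proof -
      interpret prob_space U unfolding U_def by (rule prob_space_uniform_measure[OF A])
      show "finite_measure_subalgebra U F"
        by unfold_locales (use subalg in \<open>simp add: subalgebra_def U_def\<close>)
    qed
    have [measurable]: "h \<in> borel_measurable U" "Y \<in> borel_measurable U" "u \<in> borel_measurable U"
      by (simp_all add: U_def)
    have "integrable U (\<lambda>x. h x * Y x)"
      using int unfolding U_def by (simp add: integrable_uniform_measure_iff[OF A] mult.assoc)
    note tower = U.real_cond_exp_intg[OF this \<open>h \<in> borel_measurable F\<close>]
    have ae: "AE x in U. h x * real_cond_exp U F Y x = h x * u x"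
      using u_version unfolding U_def by (auto elim: AE_mp)
    have "integrable U (\<lambda>x. h x * u x)"
      by (rule integrable_cong_AE_imp[OF tower(1) _ ae]) measurable
    moreover have "integral\<^sup>L U (\<lambda>x. h x * u x) = integral\<^sup>L U (\<lambda>x. h x * Y x)"
      using integral_cong_AE[OF _ _ ae] tower(2) by simp
    ultimately show ?thesis
      using A(1) by (simp add: U_def emeasure_eq_measure integrable_uniform_measure_iff[OF A]
          integral_uniform_measure[OF A] mult.assoc)
  qed
qed

lemma (in sigma_finite_subalgebra) integral_inverse_propensity_weighting:
  fixes a b p q f :: "'a \<Rightarrow> real"
  assumes [measurable]: "p \<in> borel_measurable F" "q \<in> borel_measurable F" "f \<in> borel_measurable F"
      "a \<in> borel_measurable M" "b \<in> borel_measurable M"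
    and p: "AE x in M. p x = real_cond_exp M F a x" and q: "AE x in M. q x = real_cond_exp M F b x"
    and p_nonzero: "AE x in M. p x \<noteq> 0"
    and int_a: "integrable M (\<lambda>x. q x / p x * a x * f x)" and int_b: "integrable M (\<lambda>x. b x * f x)"
  shows "(\<integral>x. q x / p x * a x * f x \<partial>M) = (\<integral>x. b x * f x \<partial>M)"
proof -
  have [measurable]: "p \<in> borel_measurable M" "q \<in> borel_measurable M" "f \<in> borel_measurable M"
    by (simp_all add: measurable_from_subalg[OF subalg])
  have int_a': "integrable M (\<lambda>x. (q x / p x * f x) * a x)"
    using int_a by (simp add: ac_simps)
  have int_b': "integrable M (\<lambda>x. f x * b x)"
    using int_b by (simp add: ac_simps)
  have "(\<integral>x. q x / p x * a x * f x \<partial>M) = (\<integral>x. (q x / p x * f x) * real_cond_exp M F a x \<partial>M)"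
    using real_cond_exp_intg(2)[OF int_a'] by (simp add: ac_simps)
  also have "\<dots> = (\<integral>x. f x * real_cond_exp M F b x \<partial>M)"
    using p q p_nonzero by (intro integral_cong_AE) (auto elim!: AE_mp)
  also have "\<dots> = (\<integral>x. b x * f x \<partial>M)"
    using real_cond_exp_intg(2)[OF int_b'] by (simp add: ac_simps)
  finally show ?thesis .
qed

lemma (in sigma_finite_subalgebra) doubly_robust_moment:
  fixes a0 ag p0 pg mu m :: "'a \<Rightarrow> real"
  assumes [measurable]: "p0 \<in> borel_measurable F" "pg \<in> borel_measurable F"
      "mu \<in> borel_measurable F" "m \<in> borel_measurable F"
      "a0 \<in> borel_measurable M" "ag \<in> borel_measurable M"
    and p0_nonzero: "AE x in M. p0 x \<noteq> 0"
    and correct: "(AE x in M. p0 x = real_cond_exp M F a0 x) \<and> (AE x in M. pg x = real_cond_exp M F ag x)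
      \<or> (AE x in M. mu x = m x)"
    and int_mu: "integrable M (\<lambda>x. pg x / p0 x * a0 x * mu x)" "integrable M (\<lambda>x. ag x * mu x)"
    and int_m: "integrable M (\<lambda>x. pg x / p0 x * a0 x * m x)" "integrable M (\<lambda>x. ag x * m x)"
  shows "(\<integral>x. ag x * mu x \<partial>M) + (\<integral>x. pg x / p0 x * a0 x * m x \<partial>M)
    - (\<integral>x. pg x / p0 x * a0 x * mu x \<partial>M) = (\<integral>x. ag x * m x \<partial>M)"
  using correct
proof
  assume "(AE x in M. p0 x = real_cond_exp M F a0 x) \<and> (AE x in M. pg x = real_cond_exp M F ag x)"
  then show ?thesis
    using integral_inverse_propensity_weighting[OF _ _ _ _ _ _ _ p0_nonzero int_mu]
      integral_inverse_propensity_weighting[OF _ _ _ _ _ _ _ p0_nonzero int_m]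
    by simp
next
  assume mu_eq_m: "AE x in M. mu x = m x"
  have [measurable]: "p0 \<in> borel_measurable M" "pg \<in> borel_measurable M"
      "mu \<in> borel_measurable M" "m \<in> borel_measurable M"
    by (simp_all add: measurable_from_subalg[OF subalg])
  have "(\<integral>x. ag x * mu x \<partial>M) = (\<integral>x. ag x * m x \<partial>M)"
    and "(\<integral>x. pg x / p0 x * a0 x * mu x \<partial>M) = (\<integral>x. pg x / p0 x * a0 x * m x \<partial>M)"
    using mu_eq_m by (auto intro!: integral_cong_AE elim!: AE_mp)
  then show ?thesis by simp
qed

lemma subalgebra_sigmaX: "X \<in> measurable M N \<Longrightarrow> subalgebra M (sigmaX M N X)"
  unfolding sigmaX_def subalgebra_def
  by (auto simp: sets_vimage_algebra2 measurable_def Int_commute intro: measurable_sets)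

lemma borel_measurable_sigmaX_comp:
  "X \<in> measurable M N \<Longrightarrow> f \<in> borel_measurable N \<Longrightarrow> (\<lambda>w. f (X w)) \<in> borel_measurable (sigmaX M N X)"
  unfolding sigmaX_def
  by (rule measurable_compose[OF measurable_vimage_algebra1]) (auto simp: measurable_def)

lemma borel_measurable_cohort:
  assumes [measurable]: "\<And>s. D s \<in> borel_measurable M"
  shows "cohort D T g \<in> borel_measurable M"
proof -
  have "cohort D T g = (\<lambda>w. if g = 0 then (if \<forall>t\<in>{..T}. D t w = 0 then 1 else 0)
      else (if \<forall>t\<in>{..T}. D t w = (if g \<le> t then 1 else 0) then 1 else 0))"
    by (auto simp: cohort_def fun_eq_iff)
  then show ?thesis by simp
qed

lemma sets_cohort_set:
  assumes [measurable]: "\<And>s. D s \<in> borel_measurable M"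
  shows "cohort_set M D T s \<in> sets M"
  unfolding cohort_set_def using borel_measurable_cohort[OF assms] by measurable

lemma cohort_eq_indicator:
  "w \<in> space M \<Longrightarrow> cohort D T s w = indicator (cohort_set M D T s) w"
  by (auto simp: cohort_def cohort_set_def indicator_def)

lemma integral_uniform_measure_cohort_set:
  fixes f :: "'a \<Rightarrow> real"
  assumes "finite_measure M" and [measurable]: "\<And>s. D s \<in> borel_measurable M" "f \<in> borel_measurable M"
    and nonempty: "(\<integral>w. cohort D T s w \<partial>M) \<noteq> 0"
  shows "integral\<^sup>L (uniform_measure M (cohort_set M D T s)) f
    = (\<integral>w. cohort D T s w * f w \<partial>M) / (\<integral>w. cohort D T s w \<partial>M)"
proof -
  interpret finite_measure M by fact
  have [measurable]: "cohort_set M D T s \<in> sets M" by (rule sets_cohort_set) simp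
  have "(\<integral>w. cohort D T s w \<partial>M) = measure M (cohort_set M D T s)"
    by (simp add: cohort_eq_indicator cong: Bochner_Integration.integral_cong)
  moreover have "(\<integral>w. cohort D T s w * f w \<partial>M) = (\<integral>w. indicator (cohort_set M D T s) w * f w \<partial>M)"
    by (simp add: cohort_eq_indicator cong: Bochner_Integration.integral_cong)
  ultimately show ?thesis
    using nonempty by (simp add: integral_uniform_measure emeasure_eq_measure)
qed

lemma (in finite_measure_subalgebra) real_cond_exp_cohort_intg:
  fixes h u :: "'a \<Rightarrow> real"
  assumes [measurable]: "\<And>s. D s \<in> borel_measurable M" "h \<in> borel_measurable F"
      "Y \<in> borel_measurable M" "u \<in> borel_measurable M"
    and u_version: "AE w in uniform_measure M (cohort_set M D T s).
      u w = real_cond_exp (uniform_measure M (cohort_set M D T s)) F Y w"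
    and int: "integrable M (\<lambda>w. h w * cohort D T s w * Y w)"
  shows "integrable M (\<lambda>w. h w * cohort D T s w * u w)"
    and "(\<integral>w. h w * cohort D T s w * u w \<partial>M) = (\<integral>w. h w * cohort D T s w * Y w \<partial>M)"
proof -
  have swap: "h w * cohort D T s w * v w = indicator (cohort_set M D T s) w * h w * v w"
    if "w \<in> space M" for w and v :: "'a \<Rightarrow> real"
    using that by (simp add: cohort_eq_indicator)
  have "integrable M (\<lambda>w. indicator (cohort_set M D T s) w * h w * Y w)"
    using int by (simp add: swap cong: Bochner_Integration.integrable_cong)
  from real_cond_exp_uniform_measure_intg[OF sets_cohort_set _ _ _ u_version this]
  show "integrable M (\<lambda>w. h w * cohort D T s w * u w)"
    and "(\<integral>w. h w * cohort D T s w * u w \<partial>M) = (\<integral>w. h w * cohort D T s w * Y w \<partial>M)"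
    by (simp_all add: swap cong: Bochner_Integration.integrable_cong Bochner_Integration.integral_cong)
qed

lemma (in finite_measure_subalgebra) integral_doubly_robust_score:
  fixes Y p0 pg mu mg m0 :: "'a \<Rightarrow> real"
  assumes [measurable]: "\<And>s. D s \<in> borel_measurable M" "Y \<in> borel_measurable M"
      "p0 \<in> borel_measurable F" "pg \<in> borel_measurable F" "mu \<in> borel_measurable F"
      "mg \<in> borel_measurable M" "m0 \<in> borel_measurable F"
    and p0_nonzero: "AE w in M. p0 w \<noteq> 0"
    and mg_version: "AE w in uniform_measure M (cohort_set M D T g).
      mg w = real_cond_exp (uniform_measure M (cohort_set M D T g)) F Y w"
    \<comment> \<open>a version on all of M, not only on cohort 0: with a correct outcome model,
      mu is compared with m0 on cohort g\<close>
    and m0_version: "AE w in M. m0 w = real_cond_exp (uniform_measure M (cohort_set M D T 0)) F Y w"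
    and correct: "(AE w in M. p0 w = real_cond_exp M F (cohort D T 0) w)
        \<and> (AE w in M. pg w = real_cond_exp M F (cohort D T g) w)
      \<or> (AE w in M. mu w = real_cond_exp (uniform_measure M (cohort_set M D T 0)) F Y w)"
    and int_gY: "integrable M (\<lambda>w. cohort D T g w * Y w)"
    and int_gmu: "integrable M (\<lambda>w. cohort D T g w * mu w)"
    and int_0Y: "integrable M (\<lambda>w. pg w / p0 w * cohort D T 0 w * Y w)"
    and int_0mu: "integrable M (\<lambda>w. pg w / p0 w * cohort D T 0 w * mu w)"
    and int_gm0: "integrable M (\<lambda>w. cohort D T g w * m0 w)"
  shows "(\<integral>w. (cohort D T g w - pg w / p0 w * cohort D T 0 w) * (Y w - mu w) \<partial>M)
    = (\<integral>w. cohort D T g w * (mg w - m0 w) \<partial>M)"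
proof -
  have [measurable]: "m0 \<in> borel_measurable M" "\<And>s. cohort D T s \<in> borel_measurable M"
    by (simp_all add: measurable_from_subalg[OF subalg] borel_measurable_cohort)
  note tower_g = real_cond_exp_cohort_intg[of D "\<lambda>_. 1" Y mg, OF _ _ _ _ mg_version]
  have "AE w in uniform_measure M (cohort_set M D T 0).
      m0 w = real_cond_exp (uniform_measure M (cohort_set M D T 0)) F Y w"
    using m0_version by (intro AE_uniform_measureI sets_cohort_set) (auto elim: AE_mp)
  note tower_0 = real_cond_exp_cohort_intg[OF _ _ _ _ this int_0Y]
  have "AE w in M. mu w = m0 w"
    if "AE w in M. mu w = real_cond_exp (uniform_measure M (cohort_set M D T 0)) F Y w"
    using that m0_version by eventually_elim simp
  with correct have "(AE w in M. p0 w = real_cond_exp M F (cohort D T 0) w)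
      \<and> (AE w in M. pg w = real_cond_exp M F (cohort D T g) w) \<or> (AE w in M. mu w = m0 w)"
    by blast
  note DR = doubly_robust_moment[OF _ _ _ _ _ _ p0_nonzero this int_0mu int_gmu tower_0(1) int_gm0]
  have "(\<integral>w. (cohort D T g w - pg w / p0 w * cohort D T 0 w) * (Y w - mu w) \<partial>M)
    = (\<integral>w. cohort D T g w * Y w - pg w / p0 w * cohort D T 0 w * Y w
        - (cohort D T g w * mu w - pg w / p0 w * cohort D T 0 w * mu w) \<partial>M)"
    by (simp only: left_diff_distrib right_diff_distrib)
  also have "\<dots> = (\<integral>w. cohort D T g w * mg w \<partial>M) - (\<integral>w. cohort D T g w * m0 w \<partial>M)"
    using int_gY int_gmu int_0Y int_0mu tower_g tower_0(2) DR by simp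
  also have "\<dots> = (\<integral>w. cohort D T g w * (mg w - m0 w) \<partial>M)"
    using tower_g int_gY int_gm0 by (simp add: right_diff_distrib)
  finally show ?thesis .
qed

theorem proposition7:
  fixes M :: "'a measure" and N :: "'x measure"
    and T g t :: nat
    and D Y :: "nat \<Rightarrow> 'a \<Rightarrow> real"
    and X :: "'a \<Rightarrow> 'x"
    and P :: "nat \<Rightarrow> 'x \<Rightarrow> real"
    and mu0 :: "'x \<Rightarrow> real"
    and m :: "nat \<Rightarrow> 'x \<Rightarrow> real"
  assumes prob: "prob_space M"
    and D_meas: "\<And>s. D s \<in> borel_measurable M"
    and Y_meas: "\<And>s. Y s \<in> borel_measurable M"
    and X_meas: "X \<in> measurable M N"
    and P_meas: "\<And>s. P s \<in> borel_measurable N"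
    and mu0_meas: "mu0 \<in> borel_measurable N"
    and m_meas: "\<And>s. m s \<in> borel_measurable N"
    and D_binary: "\<And>s w. s \<le> T \<Longrightarrow> w \<in> space M \<Longrightarrow> D s w \<in> {0, 1}"
    and D0_zero: "\<And>w. w \<in> space M \<Longrightarrow> D 0 w = 0"
    and staggered: "\<And>w. w \<in> space M \<Longrightarrow>
        (\<forall>s\<le>T. D s w = 0) \<or> (\<exists>h\<in>{1..T}. \<forall>s\<le>T. D s w = (if h \<le> s then 1 else 0))"
    and g_range: "g \<in> {1..T}"
    and t_range: "t \<le> T"
    and Eg_pos: "(\<integral>w. cohort D T g w \<partial>M) > 0"
    and E0X_pos: "AE w in M. real_cond_exp M (sigmaX M N X) (cohort D T 0) w > 0"
    and P0_pos: "\<And>x. x \<in> space N \<Longrightarrow> P 0 x > 0"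
    \<comment> \<open>m s is a version of x \<mapsto> E[Y_t | D^s = 1, X = x] for s = g and s = 0\<close>
    and m_g: "AE w in uniform_measure M (cohort_set M D T g).
        m g (X w) = real_cond_exp (uniform_measure M (cohort_set M D T g)) (sigmaX M N X) (Y t) w"
    and m_0: "AE w in M.
        m 0 (X w) = real_cond_exp (uniform_measure M (cohort_set M D T 0)) (sigmaX M N X) (Y t) w"
    \<comment> \<open>all expectations involved exist and are finite\<close>
    and int_Y: "integrable M (Y t)"
    and int_DR: "integrable M (\<lambda>w. (cohort D T g w - P g (X w) / P 0 (X w) * cohort D T 0 w)
                                    * (Y t w - mu0 (X w)))"
    and int_gY: "integrable M (\<lambda>w. cohort D T g w * Y t w)"
    and int_gmu: "integrable M (\<lambda>w. cohort D T g w * mu0 (X w))"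
    and int_0Y: "integrable M (\<lambda>w. P g (X w) / P 0 (X w) * cohort D T 0 w * Y t w)"
    and int_0mu: "integrable M (\<lambda>w. P g (X w) / P 0 (X w) * cohort D T 0 w * mu0 (X w))"
    and int_mg: "integrable M (\<lambda>w. cohort D T g w * m g (X w))"
    and int_m0: "integrable M (\<lambda>w. cohort D T g w * m 0 (X w))"
    and correct: "(\<forall>s\<in>{0..T}. AE w in M. P s (X w) = real_cond_exp M (sigmaX M N X) (cohort D T s) w)
        \<or> (AE w in M. mu0 (X w) = real_cond_exp (uniform_measure M (cohort_set M D T 0)) (sigmaX M N X) (Y t) w)"
  shows "tau_DR M D T X P mu0 (Y t) g =
         (\<integral>x. (m g x - m 0 x) \<partial>(distr (uniform_measure M (cohort_set M D T g)) N X))"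
proof -
  interpret prob_space M by (rule prob)
  interpret finite_measure_subalgebra M "sigmaX M N X"
    by unfold_locales (rule subalgebra_sigmaX[OF X_meas])
  note [measurable] = D_meas Y_meas X_meas P_meas mu0_meas m_meas borel_measurable_cohort[OF D_meas]
    borel_measurable_sigmaX_comp[OF X_meas]
  have "AE w in M. P 0 (X w) \<noteq> 0"
    using P0_pos measurable_space[OF X_meas] by (intro AE_I2) (metis less_irrefl)
  moreover have "(AE w in M. P 0 (X w) = real_cond_exp M (sigmaX M N X) (cohort D T 0) w)
      \<and> (AE w in M. P g (X w) = real_cond_exp M (sigmaX M N X) (cohort D T g) w)
    \<or> (AE w in M. mu0 (X w) = real_cond_exp (uniform_measure M (cohort_set M D T 0)) (sigmaX M N X) (Y t) w)"
    using correct g_range by auto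
  ultimately have "(\<integral>w. (cohort D T g w - P g (X w) / P 0 (X w) * cohort D T 0 w) * (Y t w - mu0 (X w)) \<partial>M)
    = (\<integral>w. cohort D T g w * (m g (X w) - m 0 (X w)) \<partial>M)"
    by (intro integral_doubly_robust_score m_g m_0 int_gY int_gmu int_0Y int_0mu int_m0) simp_all
  then show ?thesis
    using Eg_pos
    by (simp add: tau_DR_def integral_distr integral_uniform_measure_cohort_set finite_measure_axioms)
qed

end
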